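(* Let $\mathcal A$ be a group (not necessarily finitely generated) and let $\mathcal H$ be a proper subgroup of $\mathcal A$. Then there exists a generating system $X$ of $\mathcal A$ such that $X\cap\mathcal H=\emptyset$ and $|X|=\mathrm{rank}(\mathcal A)$.
   Context: $\mathrm{rank}(\mathcal A)$ is the minimal cardinality of a generating set of $\mathcal A$. *)

theory Defs
  imports "HOL-Algebra.Algebra"
begin

definition generating_set :: "('a, 'b) monoid_scheme \<Rightarrow> 'a set \<Rightarrow> bool" where
  "generating_set Grp S \<longleftrightarrow> S \<subseteq> carrier Grp \<and> generate Grp S = carrier Grp"

text \<open>The cardinality of S equals rank(G), the minimal cardinality of a generating set
  of G: S has cardinality at most that of every generating set of G.
  (Combined with S itself being a generating set, this says |S| = rank G.)\<close>
definition card_le_all_gensets :: "('a, 'b) monoid_scheme \<Rightarrow> 'a set \<Rightarrow> bool" where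
  "card_le_all_gensets Grp S \<longleftrightarrow>
     (\<forall>T. generating_set Grp T \<longrightarrow> (card_of S, card_of T) \<in> ordLeq)"

end

theory Submission
  imports Defs
begin

text \<open>Take a generating set X of minimal cardinality. It is not contained in the proper
  subgroup H, so it contains some y \<notin> H. Replacing every x \<in> X \<inter> H by y x gives a set
  disjoint from H (as y x \<in> H would force y \<in> H), still generating (x = y\<inverse>(y x) with
  y kept), and of cardinality at most |X|.\<close>

lemma (in group) generating_set_carrier: "generating_set G (carrier G)"
  unfolding generating_set_def
  using generate_incl[of "carrier G"] generate.incl[of _ "carrier G" G] by auto

lemma (in group) ex_minimal_generating_set:
  "\<exists>S. generating_set G S \<and> card_le_all_gensets G S"
proof -
  let ?R = "{card_of T | T. generating_set G T}"
  have "?R \<noteq> {}" using generating_set_carrier by blast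
  moreover have "\<forall>r\<in>?R. Well_order r" using card_of_Well_order by blast
  ultimately obtain r where "r \<in> ?R" and "\<forall>r'\<in>?R. r \<le>o r'"
    using exists_minim_Well_order[of ?R] by blast
  then show ?thesis unfolding card_le_all_gensets_def by blast
qed

lemma (in group) generating_set_not_subset_proper_subgroup:
  assumes "generating_set G S" and "subgroup H G" and "H \<noteq> carrier G"
  shows "\<not> S \<subseteq> H"
proof
  assume "S \<subseteq> H"
  then have "generate G S \<subseteq> H" using generate_subgroup_incl assms(2) by blast
  then show False
    using assms subgroup.subset[OF assms(2)] unfolding generating_set_def by blast
qed

lemma (in group) mult_subgroup_notin:
  assumes "subgroup H G" and "y \<in> carrier G" and "y \<notin> H" and "x \<in> H"
  shows "y \<otimes> x \<notin> H"
proof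
  assume "y \<otimes> x \<in> H"
  then have "y \<otimes> x \<otimes> inv x \<in> H"
    using assms(1,4) by (simp add: subgroup.m_closed subgroup.m_inv_closed)
  moreover have "y \<otimes> x \<otimes> inv x = y"
    using assms subgroup.subset[OF assms(1)] by (simp add: m_assoc subsetD)
  ultimately show False using assms(3) by simp
qed

lemma (in group) generating_set_avoiding_subgroup:
  assumes "generating_set G S" and "subgroup H G" and "y \<in> S" and "y \<notin> H"
  shows "\<exists>T. generating_set G T \<and> T \<inter> H = {} \<and> card_of T \<le>o card_of S"
proof -
  have SG: "S \<subseteq> carrier G" and genS: "generate G S = carrier G"
    using assms(1) unfolding generating_set_def by auto
  have HG: "H \<subseteq> carrier G" using subgroup.subset[OF assms(2)] .
  have yG: "y \<in> carrier G" using assms(3) SG by blast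
  define f where "f x = (if x \<in> H then y \<otimes> x else x)" for x
  let ?T = "f ` S"
  have yT: "y \<in> ?T" using assms(3,4) image_eqI[of y f y S] by (simp add: f_def)
  have TG: "?T \<subseteq> carrier G" using SG yG HG by (auto simp: f_def)
  have TH: "?T \<inter> H = {}"
    using mult_subgroup_notin[OF assms(2) yG assms(4)] by (auto simp: f_def)
  have "S \<subseteq> generate G ?T"
  proof
    fix x assume x: "x \<in> S"
    show "x \<in> generate G ?T"
    proof (cases "x \<in> H")
      case True
      have "y \<otimes> x \<in> ?T" using x True image_eqI[of "y \<otimes> x" f x S] by (simp add: f_def)
      then have "y \<otimes> x \<in> generate G ?T" by (rule generate.incl)
      with generate.eng[OF generate.inv[OF yT]]
      have "inv y \<otimes> (y \<otimes> x) \<in> generate G ?T" by blast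
      moreover have "inv y \<otimes> (y \<otimes> x) = x"
        using yG True HG by (simp add: m_assoc[symmetric] subsetD)
      ultimately show ?thesis by simp
    next
      case False
      then have "x \<in> ?T" using x image_eqI[of x f x S] by (simp add: f_def)
      then show ?thesis by (rule generate.incl)
    qed
  qed
  then have "generate G S \<subseteq> generate G ?T"
    using generate_subgroup_incl generate_is_subgroup[OF TG] by blast
  then have "generating_set G ?T"
    using genS generate_incl[OF TG] TG unfolding generating_set_def by blast
  then show ?thesis using TH card_of_image[of f S] by blast
qed

lemma card_le_all_gensets_ordLeq:
  assumes "card_le_all_gensets G S" and "card_of T \<le>o card_of S"
  shows "card_le_all_gensets G T"
  using assms ordLeq_transitive unfolding card_le_all_gensets_def by blast

theorem lemma6p2:
  fixes G :: "('a, 'b) monoid_scheme" and H :: "'a set"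
  assumes "group G"
    and "subgroup H G"
    and "H \<noteq> carrier G"
  shows "\<exists>Gs. generating_set G Gs \<and> Gs \<inter> H = {} \<and> card_le_all_gensets G Gs"
proof -
  interpret group G by fact
  obtain S where S: "generating_set G S" and min: "card_le_all_gensets G S"
    using ex_minimal_generating_set by blast
  then obtain y where "y \<in> S" and "y \<notin> H"
    using generating_set_not_subset_proper_subgroup[OF S assms(2,3)] by blast
  then obtain T where "generating_set G T" "T \<inter> H = {}" "card_of T \<le>o card_of S"
    using generating_set_avoiding_subgroup[OF S assms(2)] by blast
  then show ?thesis using card_le_all_gensets_ordLeq[OF min] by blast
qed

end
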